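(* Let $(X,r)$ and $(X',r')$ be non-degenerate involutive set-theoretic solutions of the Yang–Baxter equation with $|X|=|X'|=n$, and let $(\mathcal{X}^2,\tilde r)$, $(\mathcal{X}'^2,\tilde r')$ be their induced pairs. (i) If $(X,r)$ and $(X',r')$ are different (both on the index set $\{1,\dots,n\}$, with $r\neq r'$), then $(\mathcal{X}^2,\tilde r)$ and $(\mathcal{X}'^2,\tilde r')$ are different. (ii) If $(X,r)$ and $(X',r')$ are isomorphic, then $(\mathcal{X}^2,\tilde r)$ and $(\mathcal{X}'^2,\tilde r')$ are isomorphic.
   Context: A set-theoretic solution is $r:X\times X\to X\times X$, $r(x,y)=(\sigma_x(y),\gamma_y(x))$, with $r^{12}r^{23}r^{12}=r^{23}r^{12}r^{23}$; non-degenerate: all $\sigma_x,\gamma_x$ bijective; involutive: $r\circ r=\mathrm{Id}$. Two solutions $(X,r)$, $(X',r')$ are isomorphic if there is a bijection $\mu:X\to X'$ with $(\mu\times\mu)\circ r=r'\circ(\mu\times\mu)$. Induced pair of a solution on $\{1,\dots,n\}$: $\mathcal{X}^2=\{T_i^k:1\le i,k\le n\}$ ($n^2$ symbols in bijection with $X\times X$), $\tilde r(T_i^k,T_j^l)=(T_{\sigma_i(j)}^{\sigma_k(l)},T_{\gamma_j(i)}^{\gamma_l(k)})$. *)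

theory Defs
  imports Main
begin

text \<open>A map r : X \<times> X \<rightarrow> X \<times> X is represented as a HOL function on pairs;
  only its values on X \<times> X matter. r(x,y) = (sigma_x(y), gamma_y(x)).\<close>

definition sigma :: "('a \<times> 'a \<Rightarrow> 'a \<times> 'a) \<Rightarrow> 'a \<Rightarrow> 'a \<Rightarrow> 'a" where
  "sigma r x y = fst (r (x, y))"

definition gamma :: "('a \<times> 'a \<Rightarrow> 'a \<times> 'a) \<Rightarrow> 'a \<Rightarrow> 'a \<Rightarrow> 'a" where
  "gamma r y x = snd (r (x, y))"

definition r12 :: "('a \<times> 'a \<Rightarrow> 'a \<times> 'a) \<Rightarrow> 'a \<times> 'a \<times> 'a \<Rightarrow> 'a \<times> 'a \<times> 'a" where
  "r12 r t = (case t of (x, y, z) \<Rightarrow> (case r (x, y) of (u, v) \<Rightarrow> (u, v, z)))"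

definition r23 :: "('a \<times> 'a \<Rightarrow> 'a \<times> 'a) \<Rightarrow> 'a \<times> 'a \<times> 'a \<Rightarrow> 'a \<times> 'a \<times> 'a" where
  "r23 r t = (case t of (x, y, z) \<Rightarrow> (case r (y, z) of (u, v) \<Rightarrow> (x, u, v)))"

definition set_solution :: "'a set \<Rightarrow> ('a \<times> 'a \<Rightarrow> 'a \<times> 'a) \<Rightarrow> bool" where
  "set_solution X r \<longleftrightarrow>
     (\<forall>p \<in> X \<times> X. r p \<in> X \<times> X) \<and>
     (\<forall>t \<in> X \<times> X \<times> X. r12 r (r23 r (r12 r t)) = r23 r (r12 r (r23 r t)))"

definition nondegenerate :: "'a set \<Rightarrow> ('a \<times> 'a \<Rightarrow> 'a \<times> 'a) \<Rightarrow> bool" where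
  "nondegenerate X r \<longleftrightarrow>
     (\<forall>x \<in> X. bij_betw (sigma r x) X X \<and> bij_betw (gamma r x) X X)"

definition involutive :: "'a set \<Rightarrow> ('a \<times> 'a \<Rightarrow> 'a \<times> 'a) \<Rightarrow> bool" where
  "involutive X r \<longleftrightarrow> (\<forall>p \<in> X \<times> X. r (r p) = p)"

definition nd_inv_solution :: "'a set \<Rightarrow> ('a \<times> 'a \<Rightarrow> 'a \<times> 'a) \<Rightarrow> bool" where
  "nd_inv_solution X r \<longleftrightarrow> set_solution X r \<and> nondegenerate X r \<and> involutive X r"

definition sol_iso :: "'a set \<Rightarrow> ('a \<times> 'a \<Rightarrow> 'a \<times> 'a) \<Rightarrow> 'b set \<Rightarrow> ('b \<times> 'b \<Rightarrow> 'b \<times> 'b) \<Rightarrow> bool" where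
  "sol_iso X r X' r' \<longleftrightarrow>
     (\<exists>\<mu>. bij_betw \<mu> X X' \<and>
        (\<forall>p \<in> X \<times> X. map_prod \<mu> \<mu> (r p) = r' (map_prod \<mu> \<mu> p)))"

text \<open>Induced pair: the symbol T_i^k is represented by the pair (i,k) \<in> X \<times> X.
  tilde r (T_i^k, T_j^l) = (T_{sigma_i j}^{sigma_k l}, T_{gamma_j i}^{gamma_l k}).\<close>
definition induced_carrier :: "'a set \<Rightarrow> ('a \<times> 'a) set" where
  "induced_carrier X = X \<times> X"

definition induced_map :: "('a \<times> 'a \<Rightarrow> 'a \<times> 'a) \<Rightarrow> ('a \<times> 'a) \<times> ('a \<times> 'a) \<Rightarrow> ('a \<times> 'a) \<times> ('a \<times> 'a)" where
  "induced_map r p = (case p of ((i, k), (j, l)) \<Rightarrow>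
      ((sigma r i j, sigma r k l), (gamma r j i, gamma r l k)))"

definition maps_differ :: "'a set \<Rightarrow> ('a \<times> 'a \<Rightarrow> 'a \<times> 'a) \<Rightarrow> ('a \<times> 'a \<Rightarrow> 'a \<times> 'a) \<Rightarrow> bool" where
  "maps_differ X r r' \<longleftrightarrow> (\<exists>p \<in> X \<times> X. r p \<noteq> r' p)"

end

theory Submission
  imports Defs
begin

text \<open>Neither part needs the solution axioms. On the diagonal symbols T_i^i the
  induced map is a copy of r, so r is recovered from the induced map; and an isomorphism
  \<mu> of solutions commutes with every sigma_x and gamma_y, so \<mu> \<times> \<mu> is an isomorphism of
  the induced pairs.\<close>

lemma induced_map_diagonal:
  "induced_map r ((x, x), (y, y)) = map_prod (\<lambda>u. (u, u)) (\<lambda>v. (v, v)) (r (x, y))"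
  unfolding induced_map_def sigma_def gamma_def by (simp add: map_prod_def split_beta)

lemma maps_differ_induced_map:
  assumes "maps_differ X r r'"
  shows "maps_differ (induced_carrier X) (induced_map r) (induced_map r')"
proof -
  obtain x y where "x \<in> X" "y \<in> X" and neq: "r (x, y) \<noteq> r' (x, y)"
    using assms unfolding maps_differ_def by auto
  have diag_inj: "inj (map_prod (\<lambda>u. (u, u)) (\<lambda>v. (v, v)))"
    by (simp add: map_prod_inj_on inj_on_def)
  have "induced_map r ((x, x), (y, y)) \<noteq> induced_map r' ((x, x), (y, y))"
    using neq unfolding induced_map_diagonal by (auto dest: injD[OF diag_inj])
  with \<open>x \<in> X\<close> \<open>y \<in> X\<close> show ?thesis
    unfolding maps_differ_def induced_carrier_def by blast
qed

lemma
  assumes "\<forall>p \<in> X \<times> X. map_prod \<mu> \<mu> (r p) = r' (map_prod \<mu> \<mu> p)"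
    and "x \<in> X" and "y \<in> X"
  shows sigma_equivariant: "sigma r' (\<mu> x) (\<mu> y) = \<mu> (sigma r x y)"
    and gamma_equivariant: "gamma r' (\<mu> y) (\<mu> x) = \<mu> (gamma r y x)"
proof -
  have "r' (\<mu> x, \<mu> y) = map_prod \<mu> \<mu> (r (x, y))"
    using assms by simp
  then show "sigma r' (\<mu> x) (\<mu> y) = \<mu> (sigma r x y)"
    and "gamma r' (\<mu> y) (\<mu> x) = \<mu> (gamma r y x)"
    unfolding sigma_def gamma_def by (simp_all add: map_prod_def split_beta)
qed

lemma induced_map_equivariant:
  assumes "\<forall>p \<in> X \<times> X. map_prod \<mu> \<mu> (r p) = r' (map_prod \<mu> \<mu> p)"
    and "p \<in> induced_carrier X \<times> induced_carrier X"
  shows "map_prod (map_prod \<mu> \<mu>) (map_prod \<mu> \<mu>) (induced_map r p)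
       = induced_map r' (map_prod (map_prod \<mu> \<mu>) (map_prod \<mu> \<mu>) p)"
  using assms(2)
  by (auto simp: induced_carrier_def induced_map_def
        sigma_equivariant[OF assms(1)] gamma_equivariant[OF assms(1)])

lemma sol_iso_induced:
  assumes "sol_iso X r X' r'"
  shows "sol_iso (induced_carrier X) (induced_map r) (induced_carrier X') (induced_map r')"
proof -
  obtain \<mu> where bij: "bij_betw \<mu> X X'"
    and hom: "\<forall>p \<in> X \<times> X. map_prod \<mu> \<mu> (r p) = r' (map_prod \<mu> \<mu> p)"
    using assms unfolding sol_iso_def by blast
  have "bij_betw (map_prod \<mu> \<mu>) (induced_carrier X) (induced_carrier X')"
    using bij by (simp add: induced_carrier_def bij_betw_map_prod)
  with induced_map_equivariant[OF hom] show ?thesis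
    unfolding sol_iso_def by blast
qed

theorem lemma3p7:
  fixes n :: nat and r r' :: "nat \<times> nat \<Rightarrow> nat \<times> nat"
  assumes "nd_inv_solution {1..n} r" and "nd_inv_solution {1..n} r'"
  shows "(maps_differ {1..n} r r' \<longrightarrow>
            maps_differ (induced_carrier {1..n}) (induced_map r) (induced_map r'))
       \<and> (sol_iso {1..n} r {1..n} r' \<longrightarrow>
            sol_iso (induced_carrier {1..n}) (induced_map r)
                    (induced_carrier {1..n}) (induced_map r'))"
  using maps_differ_induced_map sol_iso_induced by blast

end
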